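(* With the following design of $F_A(x)=C_A(x)+S_A(x)$ and $F_B(x)=C_B(x)+S_B(x)$ in PolyDot-CMPC, the conditions C1, C2, C3 below are satisfied: $$F_A(x)=\begin{cases}F_{A_1}(x), & z>ts-t \text{ and } s,t\neq 1\\ F_{A_2}(x), & z\le ts-t \text{ or } t=1 \text{ or } s=1\end{cases}$$ $$F_{A_1}(x)=\underbrace{\sum_{i=0}^{t-1}\sum_{j=0}^{s-1}A_{i,j}x^{i+tj}}_{C_A(x)}+\sum_{w=0}^{ts-t-1}\sum_{l=0}^{p-1}\bar A_{(w+\theta' l)}x^{ts+\theta' l+w}+\sum_{u=0}^{z-1-pt(s-1)}\bar A_{(u+t(s-1)+\theta'(p-1))}x^{ts+\theta' p+u},$$ $$F_{A_2}(x)=\sum_{i=0}^{t-1}\sum_{j=0}^{s-1}A_{i,j}x^{i+tj}+\sum_{u=0}^{z-1}\bar A_u x^{ts+\theta' p+u},$$ $$F_B(x)=\begin{cases}F_{B_1}(x), & z>\tau \text{ or } t=1 \text{ or } s=1\\ F_{B_2}(x), & \frac{\tau+1}{2}<z\le\tau \text{ and } s,t\neq1\\ F_{B_3}(x), & z\le\frac{\tau+1}{2} \text{ and } s,t\neq 1\end{cases}$$ $$F_{B_1}(x)=\underbrace{\sum_{k=0}^{s-1}\sum_{l=0}^{t-1}B_{k,l}x^{t(s-1-k)+\theta' l}}_{C_B(x)}+\sum_{r=0}^{z-1}\bar B_r x^{ts+\theta'(t-1)+r},$$ $$F_{B_2}(x)=C_B(x)+\sum_{d=0}^{\tau-z}\sum_{l'=0}^{p'-1}\bar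 B_{(\theta' l'+d)}x^{ts+\theta' l'+d}+\sum_{v=0}^{z-1-p'(\tau-z+1)}\bar B_{(v+\tau-z+1+\theta'(p'-1))}x^{ts+\theta' p'+v},$$ $$F_{B_3}(x)=C_B(x)+\sum_{v=0}^{z-1}\bar B_v x^{ts+v},$$ where $\theta'=t(2s-1)$, $p=\min\{\lfloor\frac{z-1}{ts-t}\rfloor,t-1\}$, $\tau=\theta'-ts-t$, $p'=\min\{\lfloor\frac{z-1}{\tau-z+1}\rfloor,t-1\}$. The conditions are: for all $i,l\in\{0,\dots,t-1\}$, C1: $i+t(s-1)+tl(2s-1)\notin \mathbf{P}(S_A(x))+\mathbf{P}(C_B(x))$; C2: $i+t(s-1)+tl(2s-1)\notin \mathbf{P}(S_A(x))+\mathbf{P}(S_B(x))$; C3: $i+t(s-1)+tl(2s-1)\notin \mathbf{P}(S_B(x))+\mathbf{P}(C_A(x))$.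
   Context: Two sources hold private matrices $A,B\in\mathbb{F}^{m\times m}$ over a finite field $\mathbb{F}$; the goal is to compute $Y=A^TB$ with help of $N$ workers, $z$ of which may collude. Each matrix is split into $s$ row-wise and $t$ column-wise partitions ($s,t\in\mathbb{N}$, $s|m$, $t|m$, excluding $s=t=1$); $A_{i,j}$ ($i\in\{0,\dots,t-1\}$, $j\in\{0,\dots,s-1\}$) are blocks of $A^T$ and $B_{k,l}$ ($k\in\{0,\dots,s-1\}$, $l\in\{0,\dots,t-1\}$) are blocks of $B$. For a polynomial $f(x)=\sum_i a_ix^i$, $\mathbf{P}(f(x))$ is the set of exponents $i$ with $a_i\neq 0$; for integer sets, $\mathbf{A}+\mathbf{B}=\{a+b: a\in\mathbf{A}, b\in\mathbf{B}\}$. The terms $C_A,C_B$ are the PolyDot coded terms and $S_A,S_B$ the secret terms; the exponents $i+t(s-1)+tl(2s-1)$, $i,l\in\{0,\dots,t-1\}$, are the "important powers" of $C_A(x)C_B(x)$, whose coefficients $\sum_{j}A_{i,j}B_{j,l}$ form $Y$. The coefficients $\bar A_{(\cdot)}$ are chosen independently and uniformly at random in $\mathbb{F}^{\frac{m}{t}\times\frac{m}{s}}$, and $\bar B_{(\cdot)}$ independently and uniformly at random in $\mathbb{F}^{\frac{m}{s}\times\frac{m}{t}}$. *)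

theory Defs
  imports "HOL-Analysis.Analysis" "HOL-Computational_Algebra.Polynomial"
begin

definition exps :: "'a::zero poly \<Rightarrow> nat set" where
  "exps f = {i. coeff f i \<noteq> 0}"

definition sumset :: "nat set \<Rightarrow> nat set \<Rightarrow> nat set" where
  "sumset X Y = {a + b | a b. a \<in> X \<and> b \<in> Y}"

text \<open>Parameters: theta' = t(2s-1), p, tau = theta' - ts - t, p'.
  When ts - t = 0 (i.e. s = 1) the quotient (z-1)/(ts-t) is read as +infinity, so p = t-1.\<close>

definition theta' :: "nat \<Rightarrow> nat \<Rightarrow> nat" where
  "theta' s t = t * (2 * s - 1)"

definition pA :: "nat \<Rightarrow> nat \<Rightarrow> nat \<Rightarrow> nat" where
  "pA s t z = (if t * s - t = 0 then t - 1 else min ((z - 1) div (t * s - t)) (t - 1))"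

definition tau :: "nat \<Rightarrow> nat \<Rightarrow> nat" where
  "tau s t = theta' s t - t * s - t"

definition pB :: "nat \<Rightarrow> nat \<Rightarrow> nat \<Rightarrow> nat" where
  "pB s t z = min ((z - 1) div (tau s t - z + 1)) (t - 1)"

definition CA :: "nat \<Rightarrow> nat \<Rightarrow> (nat \<Rightarrow> nat \<Rightarrow> 'a::comm_monoid_add) \<Rightarrow> 'a poly" where
  "CA s t A = (\<Sum>i<t. \<Sum>j<s. monom (A i j) (i + t * j))"

definition CB :: "nat \<Rightarrow> nat \<Rightarrow> (nat \<Rightarrow> nat \<Rightarrow> 'a::comm_monoid_add) \<Rightarrow> 'a poly" where
  "CB s t B = (\<Sum>k<s. \<Sum>l<t. monom (B k l) (t * (s - 1 - k) + theta' s t * l))"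

definition SA1 :: "nat \<Rightarrow> nat \<Rightarrow> nat \<Rightarrow> (nat \<Rightarrow> 'a::comm_monoid_add) \<Rightarrow> 'a poly" where
  "SA1 s t z Ab =
     (\<Sum>w<t * s - t. \<Sum>l<pA s t z.
         monom (Ab (w + theta' s t * l)) (t * s + theta' s t * l + w))
   + (\<Sum>u<z - pA s t z * t * (s - 1).
         monom (Ab (u + t * (s - 1) + theta' s t * (pA s t z - 1))) (t * s + theta' s t * pA s t z + u))"

definition SA2 :: "nat \<Rightarrow> nat \<Rightarrow> nat \<Rightarrow> (nat \<Rightarrow> 'a::comm_monoid_add) \<Rightarrow> 'a poly" where
  "SA2 s t z Ab = (\<Sum>u<z. monom (Ab u) (t * s + theta' s t * pA s t z + u))"

definition SA :: "nat \<Rightarrow> nat \<Rightarrow> nat \<Rightarrow> (nat \<Rightarrow> 'a::comm_monoid_add) \<Rightarrow> 'a poly" where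
  "SA s t z Ab = (if z > t * s - t \<and> s \<noteq> 1 \<and> t \<noteq> 1 then SA1 s t z Ab else SA2 s t z Ab)"

definition SB1 :: "nat \<Rightarrow> nat \<Rightarrow> nat \<Rightarrow> (nat \<Rightarrow> 'a::comm_monoid_add) \<Rightarrow> 'a poly" where
  "SB1 s t z Bb = (\<Sum>r<z. monom (Bb r) (t * s + theta' s t * (t - 1) + r))"

definition SB2 :: "nat \<Rightarrow> nat \<Rightarrow> nat \<Rightarrow> (nat \<Rightarrow> 'a::comm_monoid_add) \<Rightarrow> 'a poly" where
  "SB2 s t z Bb =
     (\<Sum>d<tau s t - z + 1. \<Sum>l'<pB s t z.
         monom (Bb (theta' s t * l' + d)) (t * s + theta' s t * l' + d))
   + (\<Sum>v<z - pB s t z * (tau s t - z + 1).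
         monom (Bb (v + (tau s t - z + 1) + theta' s t * (pB s t z - 1)))
               (t * s + theta' s t * pB s t z + v))"

definition SB3 :: "nat \<Rightarrow> nat \<Rightarrow> nat \<Rightarrow> (nat \<Rightarrow> 'a::comm_monoid_add) \<Rightarrow> 'a poly" where
  "SB3 s t z Bb = (\<Sum>v<z. monom (Bb v) (t * s + v))"

definition SB :: "nat \<Rightarrow> nat \<Rightarrow> nat \<Rightarrow> (nat \<Rightarrow> 'a::comm_monoid_add) \<Rightarrow> 'a poly" where
  "SB s t z Bb =
     (if z > tau s t \<or> t = 1 \<or> s = 1 then SB1 s t z Bb
      else if real (tau s t + 1) / 2 < real z then SB2 s t z Bb
      else SB3 s t z Bb)"

definition FA :: "nat \<Rightarrow> nat \<Rightarrow> nat \<Rightarrow> (nat \<Rightarrow> nat \<Rightarrow> 'a::comm_monoid_add) \<Rightarrow> (nat \<Rightarrow> 'a) \<Rightarrow> 'a poly" where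
  "FA s t z A Ab = CA s t A + SA s t z Ab"

definition FB :: "nat \<Rightarrow> nat \<Rightarrow> nat \<Rightarrow> (nat \<Rightarrow> nat \<Rightarrow> 'a::comm_monoid_add) \<Rightarrow> (nat \<Rightarrow> 'a) \<Rightarrow> 'a poly" where
  "FB s t z B Bb = CB s t B + SB s t z Bb"

end

theory Submission
  imports Defs
begin

(* Write theta' = t(2s-1) = ts + (ts - t). The important powers are exactly the numbers
   theta' l + r with l < t and residue r in [ts - t, ts). Every exponent of S_A or S_B either lies
   at or above ts + theta'(t-1), beyond all important powers, or has residue in [ts, theta');
   S_B has such low exponents only when z <= tau, and then S_A sits in [ts, ts + z) and S_B in
   residues [ts, ts + tau - z]. Exponents of C_A are below ts and those of C_B have residue at most
   ts - t. In each of the three sums the residue part therefore falls into [ts, theta' + ts - t),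
   which modulo theta' misses [ts - t, ts). *)

lemma exps_add: "exps (p + q) \<subseteq> exps p \<union> exps q"
  unfolding exps_def by auto

lemma exps_sum: "exps (\<Sum>a\<in>A. f a) \<subseteq> (\<Union>a\<in>A. exps (f a))"
  unfolding exps_def by (auto simp: coeff_sum intro: ccontr dest: sum.neutral)

lemma exps_sum_monom: "exps (\<Sum>a\<in>A. monom (c a) (e a)) \<subseteq> e ` A"
  using exps_sum[of "\<lambda>a. monom (c a) (e a)" A] by (auto simp: exps_def split: if_splits)

lemma exps_double_sum_monom:
  "exps (\<Sum>a\<in>A. \<Sum>b\<in>B. monom (c a b) (e a b)) \<subseteq> (\<Union>a\<in>A. e a ` B)"
proof
  fix n assume "n \<in> exps (\<Sum>a\<in>A. \<Sum>b\<in>B. monom (c a b) (e a b))"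
  then obtain a where "a \<in> A" "n \<in> exps (\<Sum>b\<in>B. monom (c a b) (e a b))"
    using exps_sum[of "\<lambda>a. \<Sum>b\<in>B. monom (c a b) (e a b)" A] by blast
  then show "n \<in> (\<Union>a\<in>A. e a ` B)" using exps_sum_monom[of "c a" "e a" B] by blast
qed

lemma min_div_cases:
  fixes m z u k :: nat
  assumes "0 < m" and "u < z - min ((z - 1) div m) k * m"
  shows "min ((z - 1) div m) k = k \<or> u < m"
proof (cases "(z - 1) div m < k")
  case True
  have "z - 1 < ((z - 1) div m + 1) * m"
    using assms(1) by (metis div_mult_mod_eq mod_less_divisor add_less_mono1 distrib_right mult_1 add.commute)
  then show ?thesis using True assms(2) by (simp add: algebra_simps)
qed simp

lemma theta'_eq: "1 \<le> s \<Longrightarrow> theta' s t = t * s + (t * s - t)"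
  unfolding theta'_def by (cases s) (simp_all add: algebra_simps)

lemma tau_eq: "1 \<le> s \<Longrightarrow> tau s t = t * s - t - t"
  unfolding tau_def using theta'_eq by simp

definition important_powers :: "nat \<Rightarrow> nat \<Rightarrow> nat set" where
  "important_powers s t = {i + t * (s - 1) + t * l * (2 * s - 1) | i l. i < t \<and> l < t}"

lemma important_powers_eq:
  "important_powers s t = {theta' s t * l + (t * s - t + i) | i l. i < t \<and> l < t}"
  unfolding important_powers_def theta'_def by (auto simp: algebra_simps diff_mult_distrib2)

lemma notin_important_powers_beyond:
  assumes "1 \<le> s" and "t * s + theta' s t * (t - 1) \<le> n"
  shows "n \<notin> important_powers s t"
  using assms(2) unfolding important_powers_eq
proof clarify
  fix i l :: nat
  assume "i < t" "l < t"
  then have "theta' s t * l \<le> theta' s t * (t - 1)" by (intro mult_le_mono2) simp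
  moreover have "t \<le> t * s" using assms(1) by simp
  moreover assume "t * s + theta' s t * (t - 1) \<le> theta' s t * l + (t * s - t + i)"
  ultimately show False using \<open>i < t\<close> by linarith
qed

lemma important_powers_mod:
  assumes "1 \<le> s" and "n \<in> important_powers s t"
  shows "t * s - t \<le> n mod theta' s t \<and> n mod theta' s t < t * s"
proof -
  obtain i l where il: "i < t" "n = theta' s t * l + (t * s - t + i)"
    using assms(2) unfolding important_powers_eq by blast
  have "t \<le> t * s" using assms(1) by simp
  then have "t * s - t + i < theta' s t" using il(1) theta'_eq[OF assms(1), of t] by linarith
  then have "n mod theta' s t = t * s - t + i" using il(2) by simp
  then show ?thesis using il(1) \<open>t \<le> t * s\<close> by linarith
qed

lemma notin_important_powers_window:
  assumes "1 \<le> s" and "t * s \<le> r" and "r < theta' s t + (t * s - t)"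
  shows "theta' s t * q + r \<notin> important_powers s t"
proof
  assume imp: "theta' s t * q + r \<in> important_powers s t"
  have th: "theta' s t = t * s + (t * s - t)" using theta'_eq[OF assms(1)] .
  show False
  proof (cases "r < theta' s t")
    case True
    then have "(theta' s t * q + r) mod theta' s t = r" by simp
    then show ?thesis using important_powers_mod[OF assms(1) imp] assms(2) by simp
  next
    case False
    have "r - theta' s t < t * s - t" "r - theta' s t < theta' s t" using False assms(3) th by linarith+
    have "(theta' s t * q + r) mod theta' s t = r mod theta' s t" by simp
    also have "\<dots> = (r - theta' s t) mod theta' s t" using False by (simp add: le_mod_geq)
    also have "\<dots> = r - theta' s t" using \<open>r - theta' s t < theta' s t\<close> by simp
    finally have "(theta' s t * q + r) mod theta' s t = r - theta' s t" .
    then show ?thesis using important_powers_mod[OF assms(1) imp] \<open>r - theta' s t < t * s - t\<close> by simp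
  qed
qed

lemma exps_CA: "exps (CA s t A) \<subseteq> {..<t * s}"
proof
  fix n assume "n \<in> exps (CA s t A)"
  then obtain i j where "i < t" "j < s" "n = i + t * j"
    unfolding CA_def using exps_double_sum_monom[of "\<lambda>i j. A i j" "\<lambda>i j. i + t * j"] by blast
  moreover have "t * (j + 1) \<le> t * s" using \<open>j < s\<close> by (intro mult_le_mono2) simp
  ultimately show "n \<in> {..<t * s}" by simp
qed

lemma exps_CB: "exps (CB s t B) \<subseteq> {theta' s t * l + c | l c. c \<le> t * s - t}"
proof
  fix n assume "n \<in> exps (CB s t B)"
  then obtain k l where "n = t * (s - 1 - k) + theta' s t * l"
    unfolding CB_def
    using exps_double_sum_monom[of B "\<lambda>k l. t * (s - 1 - k) + theta' s t * l"] by blast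
  moreover have "t * (s - 1 - k) \<le> t * (s - 1)" by (intro mult_le_mono2) simp
  then have "t * (s - 1 - k) \<le> t * s - t" by (simp add: diff_mult_distrib2)
  ultimately have "n = theta' s t * l + t * (s - 1 - k) \<and> t * (s - 1 - k) \<le> t * s - t" by simp
  then show "n \<in> {theta' s t * l + c | l c. c \<le> t * s - t}" by blast
qed

lemma exps_SA_small:
  assumes "z \<le> t * s - t"
  shows "exps (SA s t z Ab) \<subseteq> {t * s..<t * s + z}"
proof -
  have "SA s t z Ab = SA2 s t z Ab" using assms unfolding SA_def by simp
  moreover have "exps (SA2 s t z Ab) \<subseteq> (\<lambda>u. t * s + theta' s t * pA s t z + u) ` {..<z}"
    unfolding SA2_def by (rule exps_sum_monom)
  moreover have "pA s t z = 0 \<or> z = 0" using assms unfolding pA_def by (cases z) auto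
  ultimately show ?thesis by auto
qed

lemma exps_SA1:
  assumes "1 \<le> s" and "t * s - t \<noteq> 0"
  shows "exps (SA1 s t z Ab) \<subseteq>
    {theta' s t * q + r | q r. t * s \<le> r \<and> r < theta' s t} \<union> {t * s + theta' s t * (t - 1)..}"
    (is "_ \<subseteq> ?window \<union> ?beyond")
proof
  define D where "D = t * s - t"
  have th: "theta' s t = t * s + D" unfolding D_def using theta'_eq[OF assms(1)] .
  have "0 < D" using assms(2) unfolding D_def by simp
  have pA: "pA s t z = min ((z - 1) div D) (t - 1)" using assms(2) unfolding pA_def D_def by simp
  have tail_length: "pA s t z * t * (s - 1) = pA s t z * D" unfolding D_def by (simp add: diff_mult_distrib2)
  fix n assume "n \<in> exps (SA1 s t z Ab)"
  then consider (body) w l where "w < D" "n = t * s + theta' s t * l + w"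
    | (tail) u where "u < z - pA s t z * D" "n = t * s + theta' s t * pA s t z + u"
    unfolding SA1_def tail_length D_def[symmetric]
    by (auto dest!: exps_add[THEN subsetD] exps_sum_monom[THEN subsetD] exps_double_sum_monom[THEN subsetD])
  then show "n \<in> ?window \<union> ?beyond"
  proof cases
    case body
    then have "n = theta' s t * l + (t * s + w) \<and> t * s \<le> t * s + w \<and> t * s + w < theta' s t"
      using th by simp
    then show ?thesis by blast
  next
    case tail
    from min_div_cases[OF \<open>0 < D\<close>] tail(1) have "pA s t z = t - 1 \<or> u < D" unfolding pA by blast
    then show ?thesis
    proof
      assume "pA s t z = t - 1"
      then show ?thesis using tail(2) by simp
    next
      assume "u < D"
      then have "n = theta' s t * pA s t z + (t * s + u) \<and> t * s \<le> t * s + u \<and> t * s + u < theta' s t"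
        using tail(2) th by simp
      then show ?thesis by blast
    qed
  qed
qed

lemma exps_SA:
  assumes "1 \<le> s" and "1 \<le> t"
  shows "exps (SA s t z Ab) \<subseteq>
    {theta' s t * q + r | q r. t * s \<le> r \<and> r < theta' s t} \<union> {t * s + theta' s t * (t - 1)..}"
    (is "_ \<subseteq> ?window \<union> ?beyond")
proof (cases "z > t * s - t \<and> s \<noteq> 1 \<and> t \<noteq> 1")
  case True
  have "t * 2 \<le> t * s" using True assms(1) by (intro mult_le_mono2) simp
  then have "t * s - t \<noteq> 0" using True assms(2) by simp
  then show ?thesis using True exps_SA1[OF assms(1), of t z Ab] unfolding SA_def by simp
next
  case False
  show ?thesis
  proof (cases "s = 1 \<or> t = 1")
    case True
    then have "SA s t z Ab = SA2 s t z Ab" "pA s t z = t - 1" unfolding SA_def pA_def by auto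
    moreover have "exps (SA2 s t z Ab) \<subseteq> (\<lambda>u. t * s + theta' s t * pA s t z + u) ` {..<z}"
      unfolding SA2_def by (rule exps_sum_monom)
    ultimately show ?thesis by auto
  next
    case False
    with \<open>\<not> (z > t * s - t \<and> s \<noteq> 1 \<and> t \<noteq> 1)\<close> have "z \<le> t * s - t" by simp
    have "{t * s..<t * s + z} \<subseteq> ?window"
    proof
      fix n assume "n \<in> {t * s..<t * s + z}"
      then have "n = theta' s t * 0 + n \<and> t * s \<le> n \<and> n < theta' s t"
        using \<open>z \<le> t * s - t\<close> theta'_eq[OF assms(1), of t] by simp
      then show "n \<in> ?window" by blast
    qed
    then show ?thesis using exps_SA_small[OF \<open>z \<le> t * s - t\<close>] by blast
  qed
qed

lemma exps_SB_large:
  assumes "tau s t < z \<or> t = 1 \<or> s = 1"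
  shows "exps (SB s t z Bb) \<subseteq> {t * s + theta' s t * (t - 1)..}"
proof -
  have "exps (SB s t z Bb) \<subseteq> (\<lambda>r. t * s + theta' s t * (t - 1) + r) ` {..<z}"
    using assms unfolding SB_def SB1_def by (simp add: exps_sum_monom)
  then show ?thesis by auto
qed

lemma exps_SB2:
  assumes "z \<le> tau s t"
  shows "exps (SB2 s t z Bb) \<subseteq>
    {theta' s t * q + (t * s + d) | q d. d + z \<le> tau s t} \<union> {t * s + theta' s t * (t - 1)..}"
    (is "_ \<subseteq> ?window \<union> ?beyond")
proof
  define m where "m = tau s t - z + 1"
  have "0 < m" unfolding m_def by simp
  have pB: "pB s t z = min ((z - 1) div m) (t - 1)" unfolding pB_def m_def ..
  fix n assume "n \<in> exps (SB2 s t z Bb)"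
  then consider (body) d l where "d < m" "n = t * s + theta' s t * l + d"
    | (tail) v where "v < z - pB s t z * m" "n = t * s + theta' s t * pB s t z + v"
    unfolding SB2_def m_def[symmetric]
    by (auto dest!: exps_add[THEN subsetD] exps_sum_monom[THEN subsetD] exps_double_sum_monom[THEN subsetD])
  then show "n \<in> ?window \<union> ?beyond"
  proof cases
    case body
    then have "n = theta' s t * l + (t * s + d) \<and> d + z \<le> tau s t"
      using assms unfolding m_def by simp
    then show ?thesis by blast
  next
    case tail
    from min_div_cases[OF \<open>0 < m\<close>] tail(1) have "pB s t z = t - 1 \<or> v < m" unfolding pB by blast
    then show ?thesis
    proof
      assume "pB s t z = t - 1"
      then show ?thesis using tail(2) by simp
    next
      assume "v < m"
      then have "n = theta' s t * pB s t z + (t * s + v) \<and> v + z \<le> tau s t"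
        using tail(2) assms unfolding m_def by simp
      then show ?thesis by blast
    qed
  qed
qed

lemma exps_SB3:
  assumes "2 * z \<le> tau s t + 1"
  shows "exps (SB3 s t z Bb) \<subseteq> {theta' s t * q + (t * s + d) | q d. d + z \<le> tau s t}"
proof
  fix n assume "n \<in> exps (SB3 s t z Bb)"
  then obtain v where "v < z" "n = t * s + v"
    unfolding SB3_def using exps_sum_monom[of Bb "\<lambda>v. t * s + v"] by blast
  then have "n = theta' s t * 0 + (t * s + v) \<and> v + z \<le> tau s t" using assms by simp
  then show "n \<in> {theta' s t * q + (t * s + d) | q d. d + z \<le> tau s t}" by blast
qed

lemma exps_SB_small:
  assumes "z \<le> tau s t" and "s \<noteq> 1" and "t \<noteq> 1"
  shows "exps (SB s t z Bb) \<subseteq>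
    {theta' s t * q + (t * s + d) | q d. d + z \<le> tau s t} \<union> {t * s + theta' s t * (t - 1)..}"
proof (cases "real (tau s t + 1) / 2 < real z")
  case True
  then show ?thesis using assms exps_SB2[OF assms(1)] unfolding SB_def by simp
next
  case False
  then have "real (2 * z) \<le> real (tau s t + 1)" by simp
  then have "2 * z \<le> tau s t + 1" by (simp only: of_nat_le_iff)
  then show ?thesis using assms False exps_SB3 unfolding SB_def by fastforce
qed

lemma exps_SB_cases:
  assumes "b \<in> exps (SB s t z Bb)"
  obtains (beyond) "t * s + theta' s t * (t - 1) \<le> b"
    | (window) q d where "z \<le> tau s t" "s \<noteq> 1" "t \<noteq> 1"
        "b = theta' s t * q + (t * s + d)" "d + z \<le> tau s t"
proof (cases "tau s t < z \<or> t = 1 \<or> s = 1")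
  case True
  then show ?thesis using assms exps_SB_large beyond by blast
next
  case False
  then have "z \<le> tau s t" "s \<noteq> 1" "t \<noteq> 1" by auto
  then show ?thesis using assms exps_SB_small beyond window by blast
qed

lemma important_powers_disjoint_SA_CB:
  assumes "1 \<le> s" and "1 \<le> t"
  shows "important_powers s t \<inter> sumset (exps (SA s t z Ab)) (exps (CB s t B)) = {}"
proof -
  have "a + b \<notin> important_powers s t" if a: "a \<in> exps (SA s t z Ab)" and b: "b \<in> exps (CB s t B)" for a b
  proof -
    obtain l c where "b = theta' s t * l + c" "c \<le> t * s - t" using b exps_CB by blast
    from a exps_SA[OF assms] consider (window) q r where "a = theta' s t * q + r" "t * s \<le> r" "r < theta' s t"
      | (beyond) "t * s + theta' s t * (t - 1) \<le> a" by blast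
    then show ?thesis
    proof cases
      case window
      have "r + c < theta' s t + (t * s - t)" using window(3) \<open>c \<le> t * s - t\<close> by linarith
      then have "theta' s t * (q + l) + (r + c) \<notin> important_powers s t"
        using window(2) by (intro notin_important_powers_window[OF assms(1)]) simp_all
      moreover have "a + b = theta' s t * (q + l) + (r + c)"
        using window(1) \<open>b = theta' s t * l + c\<close> by (simp add: algebra_simps)
      ultimately show ?thesis by simp
    next
      case beyond
      then show ?thesis by (intro notin_important_powers_beyond[OF assms(1)]) simp
    qed
  qed
  then show ?thesis unfolding sumset_def by blast
qed

lemma important_powers_disjoint_SA_SB:
  assumes "1 \<le> s" and "1 \<le> t"
  shows "important_powers s t \<inter> sumset (exps (SA s t z Ab)) (exps (SB s t z Bb)) = {}"
proof -
  have "a + b \<notin> important_powers s t" if a: "a \<in> exps (SA s t z Ab)" and b: "b \<in> exps (SB s t z Bb)" for a b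
    using b
  proof (cases rule: exps_SB_cases)
    case beyond
    then show ?thesis by (intro notin_important_powers_beyond[OF assms(1)]) simp
  next
    case (window q d)
    have th: "theta' s t = t * s + (t * s - t)" and tau: "tau s t = t * s - t - t"
      using theta'_eq[OF assms(1)] tau_eq[OF assms(1)] by simp_all
    have "t * 2 \<le> t * s" using window(2) assms(1) by (intro mult_le_mono2) simp
    have "z \<le> t * s - t" using window(1) tau by simp
    then have "a < t * s + z" using a exps_SA_small by fastforce
    then have "t * s + d + a < theta' s t + (t * s - t)"
      using window(5) th tau \<open>t * 2 \<le> t * s\<close> by linarith
    then have "theta' s t * q + (t * s + d + a) \<notin> important_powers s t"
      by (intro notin_important_powers_window[OF assms(1)]) simp_all
    moreover have "a + b = theta' s t * q + (t * s + d + a)" using window(4) by simp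
    ultimately show ?thesis by metis
  qed
  then show ?thesis unfolding sumset_def by blast
qed

lemma important_powers_disjoint_SB_CA:
  assumes "1 \<le> s" and "1 \<le> t"
  shows "important_powers s t \<inter> sumset (exps (SB s t z Bb)) (exps (CA s t A)) = {}"
proof -
  have "b + a \<notin> important_powers s t" if b: "b \<in> exps (SB s t z Bb)" and a: "a \<in> exps (CA s t A)" for a b
    using b
  proof (cases rule: exps_SB_cases)
    case beyond
    then show ?thesis by (intro notin_important_powers_beyond[OF assms(1)]) simp
  next
    case (window q d)
    have th: "theta' s t = t * s + (t * s - t)" and tau: "tau s t = t * s - t - t"
      using theta'_eq[OF assms(1)] tau_eq[OF assms(1)] by simp_all
    have "t * 2 \<le> t * s" using window(2) assms(1) by (intro mult_le_mono2) simp
    have "a < t * s" using a exps_CA by blast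
    then have "t * s + d + a < theta' s t + (t * s - t)"
      using window(5) th tau \<open>t * 2 \<le> t * s\<close> by linarith
    then have "theta' s t * q + (t * s + d + a) \<notin> important_powers s t"
      by (intro notin_important_powers_window[OF assms(1)]) simp_all
    moreover have "b + a = theta' s t * q + (t * s + d + a)" using window(4) by simp
    ultimately show ?thesis by metis
  qed
  then show ?thesis unfolding sumset_def by blast
qed

theorem theorem1:
  fixes s t z :: nat
    and A :: "nat \<Rightarrow> nat \<Rightarrow> 'f::{field,finite} ^ 'q ^ 'p"
    and Ab :: "nat \<Rightarrow> 'f ^ 'q ^ 'p"
    and B :: "nat \<Rightarrow> nat \<Rightarrow> 'f ^ 'p ^ 'q"
    and Bb :: "nat \<Rightarrow> 'f ^ 'p ^ 'q"
  assumes "1 \<le> s" and "1 \<le> t" and "\<not> (s = 1 \<and> t = 1)"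
  shows "\<forall>i<t. \<forall>l<t.
           i + t * (s - 1) + t * l * (2 * s - 1) \<notin> sumset (exps (SA s t z Ab)) (exps (CB s t B))
         \<and> i + t * (s - 1) + t * l * (2 * s - 1) \<notin> sumset (exps (SA s t z Ab)) (exps (SB s t z Bb))
         \<and> i + t * (s - 1) + t * l * (2 * s - 1) \<notin> sumset (exps (SB s t z Bb)) (exps (CA s t A))"
proof -
  have "n \<notin> sumset (exps (SA s t z Ab)) (exps (CB s t B))
      \<and> n \<notin> sumset (exps (SA s t z Ab)) (exps (SB s t z Bb))
      \<and> n \<notin> sumset (exps (SB s t z Bb)) (exps (CA s t A))" if "n \<in> important_powers s t" for n
    using that important_powers_disjoint_SA_CB[OF assms(1,2)] important_powers_disjoint_SA_SB[OF assms(1,2)]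
      important_powers_disjoint_SB_CA[OF assms(1,2)]
    by blast
  then show ?thesis unfolding important_powers_def by blast
qed

end
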